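(* Let $G(t)=\sum_{k=0}^\infty a_k\frac{t^{k+1}}{k+1}$ be a strictly increasing real analytic function with $a_0=1$, whose coefficients do not depend on $\alpha$, and such that $\ln_G(x):=G(\ln x)$ is continuous, strictly increasing and strictly concave on $(0,\infty)$. For $\alpha>1$ and probability distributions $p=(p_1,\dots,p_W)$ define $Z_{G,\alpha}(p):=\frac{\ln_G(\sum_{i=1}^W p_i^{\alpha})}{1-\alpha}$. Then $Z_{G,\alpha}$ is Schur concave: whenever $p$ and $r$ are probability distributions on $W$ points with $p\preceq r$, one has $Z_{G,\alpha}(p)\ge Z_{G,\alpha}(r)$.
   Context: Majorization: for $\mathbf a,\mathbf b\in\mathbb{R}^n$ with entries sorted in decreasing order $a_1\ge\dots\ge a_n$, $b_1\ge\dots\ge b_n$, one writes $\mathbf b\preceq\mathbf a$ (a majorizes b) if $\sum_{i=1}^k a_i\ge\sum_{i=1}^k b_i$ for $k=1,\dots,n-1$ and $\sum_{i=1}^n a_i=\sum_{i=1}^n b_i$. *)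

theory Defs
  imports "HOL-Analysis.Analysis"
begin

definition strictly_concave_on :: "real set \<Rightarrow> (real \<Rightarrow> real) \<Rightarrow> bool" where
  "strictly_concave_on S f \<longleftrightarrow> convex S \<and>
     (\<forall>x\<in>S. \<forall>y\<in>S. \<forall>t. x \<noteq> y \<and> 0 < t \<and> t < 1 \<longrightarrow>
        f (t * x + (1 - t) * y) > t * f x + (1 - t) * f y)"

text \<open>Vectors in R^n are lists of length n; sorting in decreasing order is
  rev (sort xs). majorized b a means b is majorized by a (a majorizes b).\<close>
definition majorized :: "real list \<Rightarrow> real list \<Rightarrow> bool" where
  "majorized b a \<longleftrightarrow> length a = length b \<and>
     (let a' = rev (sort a); b' = rev (sort b) in
        (\<forall>k\<in>{1..<length a}. sum_list (take k b') \<le> sum_list (take k a')) \<and>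
        sum_list a' = sum_list b')"

definition prob_dist :: "nat \<Rightarrow> real list \<Rightarrow> bool" where
  "prob_dist W p \<longleftrightarrow> length p = W \<and> (\<forall>x\<in>set p. 0 \<le> x) \<and> sum_list p = 1"

definition lnG :: "(real \<Rightarrow> real) \<Rightarrow> real \<Rightarrow> real" where
  "lnG G x = G (ln x)"

definition Z_G :: "(real \<Rightarrow> real) \<Rightarrow> real \<Rightarrow> real list \<Rightarrow> real" where
  "Z_G G \<alpha> p = lnG G (sum_list (map (\<lambda>x. x powr \<alpha>) p)) / (1 - \<alpha>)"

end

theory Submission
  imports Defs
begin

text \<open>Only the monotonicity of \<open>ln\<^sub>G\<close> and \<open>\<alpha> > 1\<close> matter. Since \<open>1 - \<alpha> < 0\<close>, the claim
  amounts to \<open>\<Sum> p\<^sub>i\<^sup>\<alpha> \<le> \<Sum> r\<^sub>i\<^sup>\<alpha>\<close>, i.e. Schur convexity of a sum of convex powers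
  (Karamata). With both vectors sorted decreasingly, convexity of \<open>t\<^sup>\<alpha>\<close> gives
  \<open>\<Sum> (r\<^sub>i\<^sup>\<alpha> - p\<^sub>i\<^sup>\<alpha>) \<ge> \<Sum> d\<^sub>i (r\<^sub>i - p\<^sub>i)\<close> with the decreasing slopes \<open>d\<^sub>i = \<alpha> p\<^sub>i\<^sup>\<alpha>\<^sup>-\<^sup>1\<close>,
  and Abel summation turns majorization (nonnegative partial sums of \<open>r - p\<close>, total 0)
  into nonnegativity of the right-hand side.\<close>

lemma powr_above_tangent:
  fixes x c \<alpha> :: real
  assumes "\<alpha> \<ge> 1" "x \<ge> 0" "c \<ge> 0"
  shows "x powr \<alpha> - c powr \<alpha> \<ge> \<alpha> * c powr (\<alpha> - 1) * (x - c)"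
proof (cases "x > 0 \<and> c > 0")
  case True
  show ?thesis
  proof (rule convex_on_imp_above_tangent[where A = "{0<..}"])
    show "convex_on {0<..} (\<lambda>t. t powr \<alpha>)"
      using assms by (auto intro: powr_convex)
    show "((\<lambda>t. t powr \<alpha>) has_real_derivative \<alpha> * c powr (\<alpha> - 1)) (at c within {0<..})"
      using True by (auto intro!: has_field_derivative_at_within has_real_derivative_powr)
    show "connected {0::real<..}"
      by simp
    show "c \<in> interior {0<..}" "x \<in> {0<..}"
      using True by (simp_all add: interior_open)
  qed
next
  case False
  show ?thesis
  proof (cases "c = 0")
    case True
    then show ?thesis
      by simp
  next
    case False
    then have "x = 0" "c > 0"
      using \<open>\<not> (x > 0 \<and> c > 0)\<close> assms by auto
    then have "\<alpha> * c powr (\<alpha> - 1) * (x - c) = - \<alpha> * c powr \<alpha>"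
      by (simp add: powr_diff mult.assoc)
    moreover have "c powr \<alpha> \<le> \<alpha> * c powr \<alpha>"
      using assms by (simp add: mult_le_cancel_right1)
    moreover have "x powr \<alpha> = 0"
      using \<open>x = 0\<close> by simp
    ultimately show ?thesis
      by linarith
  qed
qed

lemma abel_sum_lower_bound:
  fixes d u :: "nat \<Rightarrow> real"
  assumes "n \<ge> 1"
    and decreasing: "\<And>i j. i \<le> j \<Longrightarrow> j < n \<Longrightarrow> d j \<le> d i"
    and partial_nonneg: "\<And>k. k < n \<Longrightarrow> (\<Sum>i<k. u i) \<ge> 0"
  shows "(\<Sum>i<n. d i * u i) \<ge> d (n - 1) * (\<Sum>i<n. u i)"
  using assms
proof (induction n)
  case (Suc m)
  show ?case
  proof (cases "m = 0")
    case False
    have "(\<Sum>i<m. d i * u i) \<ge> d (m - 1) * (\<Sum>i<m. u i)"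
      using Suc False by auto
    moreover have "d (m - 1) * (\<Sum>i<m. u i) \<ge> d m * (\<Sum>i<m. u i)"
      using Suc.prems False by (intro mult_right_mono) auto
    ultimately show ?thesis by (simp add: algebra_simps)
  qed simp
qed simp

lemma rev_sort_nth_antimono:
  "i \<le> j \<Longrightarrow> j < length xs \<Longrightarrow> rev (sort xs) ! j \<le> rev (sort (xs :: real list)) ! i"
  by (simp add: rev_nth sorted_nth_mono)

lemma sum_list_take_eq_sum_nth:
  "k \<le> length xs \<Longrightarrow> sum_list (take k xs) = (\<Sum>i<k. (xs :: real list) ! i)"
  by (simp add: sum_list_sum_nth atLeast0LessThan min_def)

lemma sum_list_map_eq_sum_rev_sort:
  "sum_list (map f xs) = (\<Sum>i<length xs. (f :: real \<Rightarrow> real) (rev (sort xs) ! i))"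
proof -
  have "sum_list (map f xs) = sum_list (map f (rev (sort xs)))"
    by (metis mset_map mset_rev mset_sort sum_mset_sum_list)
  also have "\<dots> = (\<Sum>i<length xs. f (rev (sort xs) ! i))"
    by (simp add: sum_list_sum_nth atLeast0LessThan)
  finally show ?thesis .
qed

lemma sum_powr_le_if_majorized:
  fixes p r :: "real list" and \<alpha> :: real
  assumes "\<alpha> \<ge> 1"
    and p_nonneg: "\<forall>x\<in>set p. 0 \<le> x" and r_nonneg: "\<forall>x\<in>set r. 0 \<le> x"
    and maj: "majorized p r"
  shows "sum_list (map (\<lambda>x. x powr \<alpha>) p) \<le> sum_list (map (\<lambda>x. x powr \<alpha>) r)"
proof -
  define n where "n = length r"
  define x where "x = rev (sort r)"
  define y where "y = rev (sort p)"
  define d where "d = (\<lambda>i. \<alpha> * (y ! i) powr (\<alpha> - 1))"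
  define u where "u = (\<lambda>i. x ! i - y ! i)"
  have "length p = length r"
    using maj by (simp add: majorized_def)
  then have len: "length x = n" "length y = n" "length p = n"
    by (simp_all add: n_def x_def y_def)
  have x_nonneg: "x ! i \<ge> 0" and y_nonneg: "y ! i \<ge> 0" if "i < n" for i
    using that len p_nonneg r_nonneg unfolding x_def y_def by (metis nth_mem set_rev set_sort)+
  have "(\<Sum>i<n. d i * u i) \<ge> 0"
  proof (cases "n = 0")
    case False
    have "d j \<le> d i" if "i \<le> j" "j < n" for i j
    proof -
      have "y ! j \<le> y ! i"
        using rev_sort_nth_antimono[of i j p] that len by (simp add: y_def)
      then show ?thesis
        using y_nonneg that \<open>\<alpha> \<ge> 1\<close> by (auto simp: d_def intro: powr_mono2)
    qed
    moreover have "(\<Sum>i<k. u i) \<ge> 0" if "k < n" for k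
    proof (cases "k = 0")
      case False
      then have "sum_list (take k y) \<le> sum_list (take k x)"
        using maj that len unfolding majorized_def x_def y_def Let_def by auto
      then show ?thesis
        using that len by (simp add: u_def sum_subtractf sum_list_take_eq_sum_nth)
    qed simp
    moreover have "(\<Sum>i<n. u i) = 0"
    proof -
      have "sum_list x = sum_list y"
        using maj unfolding majorized_def x_def y_def Let_def by auto
      then show ?thesis
        using sum_list_take_eq_sum_nth[of n x] sum_list_take_eq_sum_nth[of n y] len
        by (simp add: u_def sum_subtractf)
    qed
    ultimately show ?thesis
      using abel_sum_lower_bound[of n d u] False by simp
  qed simp
  also have "\<dots> \<le> (\<Sum>i<n. (x ! i) powr \<alpha> - (y ! i) powr \<alpha>)"
    using powr_above_tangent \<open>\<alpha> \<ge> 1\<close> x_nonneg y_nonneg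
    by (intro sum_mono) (auto simp: d_def u_def)
  also have "\<dots> = sum_list (map (\<lambda>x. x powr \<alpha>) r) - sum_list (map (\<lambda>x. x powr \<alpha>) p)"
    using sum_list_map_eq_sum_rev_sort[of "\<lambda>x. x powr \<alpha>" r]
      sum_list_map_eq_sum_rev_sort[of "\<lambda>x. x powr \<alpha>" p] len(3)
    by (simp add: sum_subtractf x_def y_def n_def)
  finally show ?thesis
    by simp
qed

lemma sum_powr_pos_if_prob_dist:
  assumes "prob_dist W p"
  shows "sum_list (map (\<lambda>x. x powr \<alpha>) p) > 0"
proof -
  have "sum_list (map (\<lambda>x. x powr \<alpha>) p) \<noteq> 0"
  proof
    assume "sum_list (map (\<lambda>x. x powr \<alpha>) p) = 0"
    then have "\<forall>y\<in>set (map (\<lambda>x. x powr \<alpha>) p). y = 0"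
      by (subst (asm) sum_list_nonneg_eq_0_iff) auto
    then have "\<forall>x\<in>set p. x = 0"
      by simp
    then show False
      using assms sum_list_nonneg_eq_0_iff[of p] by (auto simp: prob_dist_def)
  qed
  moreover have "sum_list (map (\<lambda>x. x powr \<alpha>) p) \<ge> 0"
    by (rule sum_list_nonneg) auto
  ultimately show ?thesis
    by linarith
qed

theorem mainTheorem7:
  fixes a :: "nat \<Rightarrow> real" and G :: "real \<Rightarrow> real"
    and \<alpha> :: real and W :: nat and p r :: "real list"
  assumes series: "\<And>t. (\<lambda>k. a k * t ^ (k + 1) / real (k + 1)) sums G t"
    and a0: "a 0 = 1"
    and G_incr: "strict_mono G"
    and lnG_cont: "continuous_on {0<..} (lnG G)"
    and lnG_incr: "strict_mono_on {0<..} (lnG G)"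
    and lnG_conc: "strictly_concave_on {0<..} (lnG G)"
    and alpha: "\<alpha> > 1"
    and p: "prob_dist W p" and r: "prob_dist W r"
    and maj: "majorized p r"
  shows "Z_G G \<alpha> p \<ge> Z_G G \<alpha> r"
proof -
  let ?S = "\<lambda>q. sum_list (map (\<lambda>x. x powr \<alpha>) q)"
  have "?S p \<le> ?S r"
    using sum_powr_le_if_majorized[of \<alpha> p r] alpha p r maj by (auto simp: prob_dist_def)
  moreover have "?S p > 0"
    using sum_powr_pos_if_prob_dist[OF p] .
  ultimately have "lnG G (?S p) \<le> lnG G (?S r)"
    by (intro strict_mono_on_leD[OF lnG_incr]) auto
  then show ?thesis
    unfolding Z_G_def using alpha by (intro divide_right_mono_neg) auto
qed

end
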